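(* Let $Q$ be a quiver and $C\subseteq\Bbbk Q$ a subcoalgebra. (1) Every finite dimensional right coideal of $C$ is contained in a right coideal of $C$ generated by multipaths in $C$. (2) Let $I$ be a finitely generated right coideal of $C$ and let $B$ be a generating set of $I$ (as a right coideal) whose elements are multipaths in $C$. Then there is a finite independent set $F\subseteq B$ that generates $I$.
   Context: $\Bbbk$ is a field. The path coalgebra $\Bbbk Q$ has basis all paths of $Q$ (including trivial paths, identified with vertices), with $\Delta(p)=\sum_{xy=p}x\otimes y$ ($xy$ = concatenation) and $\varepsilon(p)=1$ if $p$ is trivial, $0$ otherwise. A right coideal of $C$ is a subspace $I$ with $\Delta(I)\subseteq I\otimes C$; for $x\in C$, $\langle x\rangle^C$ is the smallest right coideal of $C$ containing $x$, and a right coideal is generated by a set if it is the smallest right coideal containing it. A multipath is a nonzero linear combination of paths all sharing the same source and the same target; $M(C)$ is the set of multipaths in $C$. A subset $F\subseteq M(C)$ is independent if it is linearly independent and $\langle x\rangle^C\cap F=\{x\}$ for each $x\in F$. *)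

theory Defs
  imports Complex_Main "HOL-Library.Function_Algebras"
begin

text \<open>A quiver is given by source and target maps src, tgt from arrows to vertices.
A path is a pair (v, as): start vertex v and a list of composable arrows
(as = [] is the trivial path at v).  Concatenation xy means: first x, then y.\<close>

definition is_path :: "('a \<Rightarrow> 'v) \<Rightarrow> ('a \<Rightarrow> 'v) \<Rightarrow> 'v \<times> 'a list \<Rightarrow> bool" where
  "is_path src tgt p = (snd p = [] \<or>
     (src (hd (snd p)) = fst p \<and>
      (\<forall>i. Suc i < length (snd p) \<longrightarrow> tgt (snd p ! i) = src (snd p ! Suc i))))"

definition psource :: "'v \<times> 'a list \<Rightarrow> 'v" where
  "psource p = fst p"

definition ptarget :: "('a \<Rightarrow> 'v) \<Rightarrow> 'v \<times> 'a list \<Rightarrow> 'v" where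
  "ptarget tgt p = (if snd p = [] then fst p else tgt (last (snd p)))"

definition pathcoalg :: "('a \<Rightarrow> 'v) \<Rightarrow> ('a \<Rightarrow> 'v) \<Rightarrow> ('v \<times> 'a list \<Rightarrow> 'k::field) set" where
  "pathcoalg src tgt = {f. finite {p. f p \<noteq> 0} \<and> (\<forall>p. f p \<noteq> 0 \<longrightarrow> is_path src tgt p)}"

definition scalef :: "'k::field \<Rightarrow> ('b \<Rightarrow> 'k) \<Rightarrow> ('b \<Rightarrow> 'k)" where
  "scalef c f = (\<lambda>x. c * f x)"

text \<open>Tensor product of subspaces A, B of kQ inside kQ \<otimes> kQ (functions on pairs of paths).\<close>
definition tensor :: "('b \<Rightarrow> 'k::field) set \<Rightarrow> ('b \<Rightarrow> 'k) set \<Rightarrow> ('b \<times> 'b \<Rightarrow> 'k) set" where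
  "tensor A B = module.span scalef {(\<lambda>(p, q). x p * y q) | x y. x \<in> A \<and> y \<in> B}"

text \<open>Comultiplication, the linear extension of Delta(p) = sum over xy = p of x \<otimes> y:
the coefficient of x \<otimes> y in Delta(f) is the coefficient of xy in f.\<close>
definition Delta :: "('a \<Rightarrow> 'v) \<Rightarrow> ('a \<Rightarrow> 'v) \<Rightarrow> ('v \<times> 'a list \<Rightarrow> 'k::field)
    \<Rightarrow> ('v \<times> 'a list) \<times> ('v \<times> 'a list) \<Rightarrow> 'k" where
  "Delta src tgt f = (\<lambda>(x, y). if is_path src tgt x \<and> is_path src tgt y \<and> ptarget tgt x = psource y
       then f (psource x, snd x @ snd y) else 0)"

definition subcoalgebra :: "('a \<Rightarrow> 'v) \<Rightarrow> ('a \<Rightarrow> 'v) \<Rightarrow> ('v \<times> 'a list \<Rightarrow> 'k::field) set \<Rightarrow> bool" where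
  "subcoalgebra src tgt C = (C \<subseteq> pathcoalg src tgt \<and> module.subspace scalef C \<and>
      Delta src tgt ` C \<subseteq> tensor C C)"

definition right_coideal :: "('a \<Rightarrow> 'v) \<Rightarrow> ('a \<Rightarrow> 'v) \<Rightarrow> ('v \<times> 'a list \<Rightarrow> 'k::field) set
    \<Rightarrow> ('v \<times> 'a list \<Rightarrow> 'k) set \<Rightarrow> bool" where
  "right_coideal src tgt C I = (I \<subseteq> C \<and> module.subspace scalef I \<and>
      Delta src tgt ` I \<subseteq> tensor I C)"

definition generates :: "('a \<Rightarrow> 'v) \<Rightarrow> ('a \<Rightarrow> 'v) \<Rightarrow> ('v \<times> 'a list \<Rightarrow> 'k::field) set
    \<Rightarrow> ('v \<times> 'a list \<Rightarrow> 'k) set \<Rightarrow> ('v \<times> 'a list \<Rightarrow> 'k) set \<Rightarrow> bool" where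
  "generates src tgt C X I = (right_coideal src tgt C I \<and> X \<subseteq> I \<and>
      (\<forall>J. right_coideal src tgt C J \<and> X \<subseteq> J \<longrightarrow> I \<subseteq> J))"

definition coideal_gen :: "('a \<Rightarrow> 'v) \<Rightarrow> ('a \<Rightarrow> 'v) \<Rightarrow> ('v \<times> 'a list \<Rightarrow> 'k::field) set
    \<Rightarrow> ('v \<times> 'a list \<Rightarrow> 'k) \<Rightarrow> ('v \<times> 'a list \<Rightarrow> 'k) set" where
  "coideal_gen src tgt C x = (THE I. generates src tgt C {x} I)"

definition multipath :: "('a \<Rightarrow> 'v) \<Rightarrow> ('a \<Rightarrow> 'v) \<Rightarrow> ('v \<times> 'a list \<Rightarrow> 'k::field) \<Rightarrow> bool" where
  "multipath src tgt f = (f \<in> pathcoalg src tgt \<and> f \<noteq> 0 \<and>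
      (\<exists>v w. \<forall>p. f p \<noteq> 0 \<longrightarrow> psource p = v \<and> ptarget tgt p = w))"

definition multipaths :: "('a \<Rightarrow> 'v) \<Rightarrow> ('a \<Rightarrow> 'v) \<Rightarrow> ('v \<times> 'a list \<Rightarrow> 'k::field) set
    \<Rightarrow> ('v \<times> 'a list \<Rightarrow> 'k) set" where
  "multipaths src tgt C = {f \<in> C. multipath src tgt f}"

definition independent_mp :: "('a \<Rightarrow> 'v) \<Rightarrow> ('a \<Rightarrow> 'v) \<Rightarrow> ('v \<times> 'a list \<Rightarrow> 'k::field) set
    \<Rightarrow> ('v \<times> 'a list \<Rightarrow> 'k) set \<Rightarrow> bool" where
  "independent_mp src tgt C F = (F \<subseteq> multipaths src tgt C \<and> \<not> module.dependent scalef F \<and>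
      (\<forall>x\<in>F. coideal_gen src tgt C x \<inter> F = {x}))"

definition finite_dim :: "('b \<Rightarrow> 'k::field) set \<Rightarrow> bool" where
  "finite_dim I = (\<exists>S. finite S \<and> S \<subseteq> I \<and> I \<subseteq> module.span scalef S)"

end

theory Submission
  imports Defs
begin

text \<open>
  The smallest right coideal containing a set S \<subseteq> C is the hull of S, the intersection of all
  right coideals containing it. Intersections of right coideals are right coideals because an
  element of \<open>D \<otimes> C\<close> all of whose columns \<open>h(-, q)\<close> lie in a subspace A lies in \<open>A \<otimes> C\<close>
  (Gaussian elimination on the second tensor factors).

  (1) C is spanned by its multipaths: the part of \<open>f \<in> C\<close> supported on paths from v to w is
  again in C, being a row of \<open>\<Delta> f\<close> at the trivial path v followed by a column at the trivial
  path w. So C is generated by its multipaths and contains every right coideal.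

  (2) The hulls of the finite subsets of B form a directed family whose union is a right
  coideal containing B, hence containing I. Thus each of the finitely many generators of I lies in
  the hull of a finite subset of B, giving a finite \<open>F\<^sub>0 \<subseteq> B\<close> with hull I. An irredundant
  \<open>F \<subseteq> F\<^sub>0\<close> with the same hull (no element in the hull of the others) is independent: it is
  linearly independent since spans lie in hulls, and \<open>\<langle>x\<rangle> \<inter> F = {x}\<close> since \<open>\<langle>x\<rangle>\<close> lies in the
  hull of \<open>F - {y}\<close> for every \<open>y \<noteq> x\<close>.
\<close>

interpretation V: vector_space "scalef :: 'k::field \<Rightarrow> ('b \<Rightarrow> 'k) \<Rightarrow> ('b \<Rightarrow> 'k)"
  by unfold_locales (auto simp: scalef_def fun_eq_iff algebra_simps)

lemma scalef_apply [simp]: "scalef c f x = c * f x"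
  by (simp add: scalef_def)

lemma sum_fun_apply: "sum f A x = (\<Sum>a\<in>A. f a x)"
  by (induction A rule: infinite_finite_induct) auto

definition tens :: "('b \<Rightarrow> 'k::field) \<Rightarrow> ('c \<Rightarrow> 'k) \<Rightarrow> 'b \<times> 'c \<Rightarrow> 'k" where
  "tens x y = (\<lambda>(p, q). x p * y q)"

lemma tens_apply [simp]: "tens x y (p, q) = x p * y q"
  by (simp add: tens_def)

lemma tensor_eq_span: "tensor A B = V.span {tens x y | x y. x \<in> A \<and> y \<in> B}"
  by (simp add: tensor_def tens_def)

lemma tensor_mono: "A \<subseteq> A' \<Longrightarrow> tensor A B \<subseteq> tensor A' B"
  unfolding tensor_eq_span by (rule V.span_mono) blast

lemma linear_map_tensor_mem:
  assumes "module_hom scalef scalef \<phi>" and "V.subspace A"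
    and "\<And>x y. x \<in> D \<Longrightarrow> y \<in> E \<Longrightarrow> \<phi> (tens x y) \<in> A"
    and "h \<in> tensor D E"
  shows "\<phi> h \<in> A"
proof -
  have "V.span {tens x y | x y. x \<in> D \<and> y \<in> E} \<subseteq> \<phi> -` A"
    using assms(1-3) by (intro V.span_minimal module_hom.subspace_vimage) auto
  then show ?thesis
    using assms(4) by (auto simp: tensor_eq_span)
qed

lemma tensor_column_mem:
  assumes "V.subspace A" and "h \<in> tensor A B"
  shows "(\<lambda>p. h (p, q)) \<in> A"
proof (rule linear_map_tensor_mem[OF _ assms(1) _ assms(2)])
  show "module_hom scalef scalef (\<lambda>h p. h (p, q))"
    by (auto simp: module_hom_iff V.module_axioms)
  show "(\<lambda>p. tens x y (p, q)) \<in> A" if "x \<in> A" for x y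
    using V.subspace_scale[OF assms(1) that, of "y q"] by (simp add: tens_def mult.commute scalef_def)
qed

lemma tensor_row_mem:
  assumes "V.subspace B" and "h \<in> tensor A B"
  shows "(\<lambda>q. h (p, q)) \<in> B"
proof (rule linear_map_tensor_mem[OF _ assms(1) _ assms(2)])
  show "module_hom scalef scalef (\<lambda>h q. h (p, q))"
    by (auto simp: module_hom_iff V.module_axioms)
  show "(\<lambda>q. tens x y (p, q)) \<in> B" if "y \<in> B" for x y
    using V.subspace_scale[OF assms(1) that, of "x p"] by (simp add: tens_def scalef_def)
qed

definition tensor_sum :: "(('b \<Rightarrow> 'k::field) \<times> ('c \<Rightarrow> 'k)) list \<Rightarrow> 'b \<times> 'c \<Rightarrow> 'k" where
  "tensor_sum L = (\<Sum>(x, y)\<leftarrow>L. tens x y)"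

lemma tensor_sum_Nil [simp]: "tensor_sum [] = 0"
  by (simp add: tensor_sum_def)

lemma tensor_sum_Cons [simp]: "tensor_sum ((x, y) # L) = tens x y + tensor_sum L"
  by (simp add: tensor_sum_def)

lemma tensor_sum_apply: "tensor_sum L (p, r) = (\<Sum>(u, w)\<leftarrow>L. u p * w r)"
  by (induction L) (auto simp: tens_def)

lemma obtain_tensor_sum:
  assumes "h \<in> tensor D E"
  obtains L where "snd ` set L \<subseteq> E" and "h = tensor_sum L"
proof -
  have "\<exists>L. snd ` set L \<subseteq> E \<and> h = tensor_sum L"
    using assms unfolding tensor_eq_span
  proof (induction rule: V.span_induct_alt)
    case base
    show ?case by (intro exI[of _ "[]"]) simp
  next
    case (step c g h)
    then obtain x y L where "g = tens x y" "y \<in> E" "snd ` set L \<subseteq> E" "h = tensor_sum L"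
      by auto
    then show ?case
      by (intro exI[of _ "(scalef c x, y) # L"]) (auto simp: tens_def fun_eq_iff)
  qed
  then show thesis using that by blast
qed

lemma tensor_sum_pivot:
  assumes "y q0 \<noteq> 0"
  shows "tensor_sum L =
    tensor_sum (map (\<lambda>(u, w). (u, w - scalef (w q0 / y q0) y)) L)
      + tens (scalef (1 / y q0) (\<lambda>p. tensor_sum L (p, q0))) y"
proof (rule ext, clarify)
  fix p r
  have "(\<Sum>(u, w)\<leftarrow>L. u p * w r) =
      (\<Sum>(u, w)\<leftarrow>L. u p * (w r - w q0 / y q0 * y r)) + (\<Sum>(u, w)\<leftarrow>L. u p * w q0) / y q0 * y r"
    by (induction L) (auto simp: algebra_simps add_divide_distrib)
  then show "tensor_sum L (p, r) = (tensor_sum (map (\<lambda>(u, w). (u, w - scalef (w q0 / y q0) y)) L)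
      + tens (scalef (1 / y q0) (\<lambda>p. tensor_sum L (p, q0))) y) (p, r)"
    by (simp add: tensor_sum_apply o_def split_def)
qed

lemma tensor_sum_mem_tensor:
  assumes A: "V.subspace A" and C: "V.subspace C"
  shows "snd ` set L \<subseteq> C \<Longrightarrow> (\<And>q. (\<lambda>p. tensor_sum L (p, q)) \<in> A) \<Longrightarrow> tensor_sum L \<in> tensor A C"
proof (induction "length L" arbitrary: L)
  case 0
  then have "tensor_sum L = 0" by simp
  then show ?case unfolding tensor_eq_span by (simp only: V.span_zero)
next
  case (Suc n)
  then obtain x y L0 where L: "L = (x, y) # L0" and n: "n = length L0"
    by (cases L) auto
  have yC: "y \<in> C" and L0C: "snd ` set L0 \<subseteq> C"
    using Suc.prems(1) L by auto
  show ?case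
  proof (cases "y = 0")
    case True
    then have "tensor_sum L = tensor_sum L0"
      by (simp add: L fun_eq_iff tens_def)
    then show ?thesis
      using Suc.hyps(1)[OF n L0C] Suc.prems(2) by simp
  next
    case False
    then obtain q0 where q0: "y q0 \<noteq> 0"
      by (auto simp: fun_eq_iff)
    define a where "a = (\<lambda>p. tensor_sum L (p, q0))"
    define L1 where "L1 = map (\<lambda>(u, w). (u, w - scalef (w q0 / y q0) y)) L0"
    define g where "g = tens (scalef (1 / y q0) a) y"
    have "tensor_sum (map (\<lambda>(u, w). (u, w - scalef (w q0 / y q0) y)) L) = tensor_sum L1"
      using q0 by (simp add: L L1_def fun_eq_iff tens_def)
    then have split: "tensor_sum L = tensor_sum L1 + g"
      using tensor_sum_pivot[of y q0 L] q0 by (simp add: a_def g_def)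
    have "snd ` set L1 \<subseteq> C"
      using L0C yC by (auto simp: L1_def intro!: V.subspace_diff[OF C] V.subspace_scale[OF C])
    moreover have "(\<lambda>p. tensor_sum L1 (p, q)) \<in> A" for q
    proof -
      have "(\<lambda>p. tensor_sum L1 (p, q)) = (\<lambda>p. tensor_sum L (p, q)) - scalef (y q / y q0) a"
        using split by (auto simp: fun_eq_iff g_def)
      then show ?thesis
        using Suc.prems(2) by (auto simp: a_def intro!: V.subspace_diff[OF A] V.subspace_scale[OF A])
    qed
    ultimately have "tensor_sum L1 \<in> tensor A C"
      using Suc.hyps(1)[of L1] n by (simp add: L1_def)
    moreover have "g \<in> tensor A C"
      unfolding tensor_eq_span g_def
      using V.subspace_scale[OF A Suc.prems(2)] yC by (intro V.span_base) (auto simp: a_def)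
    ultimately show ?thesis
      unfolding split tensor_eq_span by (rule V.span_add)
  qed
qed

lemma tensor_mem_if_columns_mem:
  assumes "V.subspace A" and "V.subspace C" and "h \<in> tensor D C"
    and "\<And>q. (\<lambda>p. h (p, q)) \<in> A"
  shows "h \<in> tensor A C"
  using assms tensor_sum_mem_tensor by (metis obtain_tensor_sum)

lemma hull_irredundant_subset:
  assumes "finite F0"
  shows "\<exists>F\<subseteq>F0. P hull F = P hull F0 \<and> (\<forall>x\<in>F. x \<notin> P hull (F - {x}))"
  using assms
proof (induction F0 rule: finite_psubset_induct)
  case (psubset F0)
  show ?case
  proof (cases "\<forall>x\<in>F0. x \<notin> P hull (F0 - {x})")
    case True
    then show ?thesis by auto
  next
    case False
    then obtain x where x: "x \<in> F0" "x \<in> P hull (F0 - {x})"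
      by auto
    then have same_hull: "P hull (F0 - {x}) = P hull F0"
      using hull_redundant[of x P "F0 - {x}"] by (simp add: insert_absorb)
    from x(1) have "F0 - {x} \<subset> F0"
      by blast
    then obtain F where "F \<subseteq> F0 - {x}" "P hull F = P hull (F0 - {x})"
      "\<forall>y\<in>F. y \<notin> P hull (F - {y})"
      using psubset.IH by meson
    then show ?thesis
      using same_hull by auto
  qed
qed

lemma right_coideal_Inter:
  assumes C: "V.subspace C" and "\<J> \<noteq> {}"
    and coideals: "\<And>J. J \<in> \<J> \<Longrightarrow> right_coideal src tgt C J"
  shows "right_coideal src tgt C (\<Inter>\<J>)"
  unfolding right_coideal_def
proof (intro conjI subsetI)
  obtain J0 where J0: "J0 \<in> \<J>"
    using \<open>\<J> \<noteq> {}\<close> by blast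
  then show "x \<in> C" if "x \<in> \<Inter>\<J>" for x
    using that coideals by (auto simp: right_coideal_def)
  show sub: "V.subspace (\<Inter>\<J>)"
    using coideals by (intro V.subspace_Inter) (simp add: right_coideal_def)
  fix d assume "d \<in> Delta src tgt ` \<Inter>\<J>"
  then obtain x where x: "x \<in> \<Inter>\<J>" and d: "d = Delta src tgt x"
    by blast
  have in_tensor: "d \<in> tensor J C" if "J \<in> \<J>" for J
    using that x d coideals by (auto simp: right_coideal_def)
  have columns: "(\<lambda>p. d (p, q)) \<in> \<Inter>\<J>" for q
    using in_tensor coideals by (auto simp: right_coideal_def intro: tensor_column_mem)
  show "d \<in> tensor (\<Inter>\<J>) C"
    by (rule tensor_mem_if_columns_mem[OF sub C in_tensor[OF J0] columns])
qed

lemma right_coideal_hull: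
  assumes "right_coideal src tgt C C" and "S \<subseteq> C"
  shows "right_coideal src tgt C (right_coideal src tgt C hull S)"
  unfolding hull_def
  using assms by (intro right_coideal_Inter) (auto simp: right_coideal_def)

lemma subcoalgebra_right_coideal_self:
  "subcoalgebra src tgt C \<Longrightarrow> right_coideal src tgt C C"
  by (simp add: subcoalgebra_def right_coideal_def)

lemma generates_iff_hull:
  assumes "right_coideal src tgt C C"
  shows "generates src tgt C S I \<longleftrightarrow> S \<subseteq> C \<and> I = right_coideal src tgt C hull S"
proof
  assume "generates src tgt C S I"
  then have I: "right_coideal src tgt C I" and "S \<subseteq> I"
    and minimal: "\<And>J. S \<subseteq> J \<Longrightarrow> right_coideal src tgt C J \<Longrightarrow> I \<subseteq> J"
    by (auto simp: generates_def)
  have "right_coideal src tgt C hull S = I"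
    using \<open>S \<subseteq> I\<close> I minimal by (rule hull_unique)
  then show "S \<subseteq> C \<and> I = right_coideal src tgt C hull S"
    using \<open>S \<subseteq> I\<close> I by (auto simp: right_coideal_def)
next
  assume "S \<subseteq> C \<and> I = right_coideal src tgt C hull S"
  then show "generates src tgt C S I"
    using right_coideal_hull[OF assms] by (auto simp: generates_def hull_subset hull_minimal)
qed

lemma coideal_gen_eq_hull:
  assumes "right_coideal src tgt C C" and "x \<in> C"
  shows "coideal_gen src tgt C x = right_coideal src tgt C hull {x}"
  unfolding coideal_gen_def using assms by (intro the_equality) (simp_all add: generates_iff_hull)

lemma right_coideal_Union_directed:
  assumes "\<J> \<noteq> {}" and coideals: "\<And>J. J \<in> \<J> \<Longrightarrow> right_coideal src tgt C J"
    and directed: "\<And>J1 J2. J1 \<in> \<J> \<Longrightarrow> J2 \<in> \<J> \<Longrightarrow> \<exists>J\<in>\<J>. J1 \<union> J2 \<subseteq> J"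
  shows "right_coideal src tgt C (\<Union>\<J>)"
  unfolding right_coideal_def
proof (intro conjI subsetI)
  show "x \<in> C" if "x \<in> \<Union>\<J>" for x
    using that coideals by (auto simp: right_coideal_def)
  show "V.subspace (\<Union>\<J>)"
  proof (rule V.subspaceI)
    show "0 \<in> \<Union>\<J>"
      using \<open>\<J> \<noteq> {}\<close> coideals by (auto simp: right_coideal_def V.subspace_0)
    show "x + y \<in> \<Union>\<J>" if xy: "x \<in> \<Union>\<J>" "y \<in> \<Union>\<J>" for x y
    proof -
      obtain J1 J2 where "J1 \<in> \<J>" "x \<in> J1" "J2 \<in> \<J>" "y \<in> J2"
        using xy by blast
      then obtain J where "J \<in> \<J>" "x \<in> J" "y \<in> J"
        using directed by blast
      then show ?thesis
        using coideals[of J] V.subspace_add[of J x y] by (auto simp: right_coideal_def)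
    qed
    show "scalef c x \<in> \<Union>\<J>" if x: "x \<in> \<Union>\<J>" for c x
    proof -
      obtain J where "J \<in> \<J>" "x \<in> J"
        using x by blast
      then show ?thesis
        using coideals[of J] V.subspace_scale[of J x c] by (auto simp: right_coideal_def)
    qed
  qed
  show "d \<in> tensor (\<Union>\<J>) C" if d: "d \<in> Delta src tgt ` \<Union>\<J>" for d
  proof -
    obtain J x where "J \<in> \<J>" "x \<in> J" "d = Delta src tgt x"
      using d by blast
    then have "d \<in> tensor J C"
      using coideals by (auto simp: right_coideal_def)
    then show ?thesis
      using tensor_mono[of J "\<Union>\<J>" C] \<open>J \<in> \<J>\<close> by blast
  qed
qed

context
  fixes src tgt :: "'a \<Rightarrow> 'v" and C :: "('v \<times> 'a list \<Rightarrow> 'k::field) set"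
  assumes C: "right_coideal src tgt C C"
begin

lemma mem_hull_finite_subset:
  assumes "S \<subseteq> C" and "x \<in> right_coideal src tgt C hull S"
  obtains F where "finite F" "F \<subseteq> S" "x \<in> right_coideal src tgt C hull F"
proof -
  let ?\<J> = "{right_coideal src tgt C hull F | F. finite F \<and> F \<subseteq> S}"
  have "right_coideal src tgt C (\<Union>?\<J>)"
  proof (rule right_coideal_Union_directed)
    show "?\<J> \<noteq> {}" by auto
    show "right_coideal src tgt C J" if "J \<in> ?\<J>" for J
      using that \<open>S \<subseteq> C\<close> right_coideal_hull[OF C] by auto
    show "\<exists>J\<in>?\<J>. J1 \<union> J2 \<subseteq> J" if J12: "J1 \<in> ?\<J>" "J2 \<in> ?\<J>" for J1 J2
    proof -
      obtain F1 F2 where "finite F1" "F1 \<subseteq> S" "J1 = right_coideal src tgt C hull F1"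
        "finite F2" "F2 \<subseteq> S" "J2 = right_coideal src tgt C hull F2"
        using J12 by auto
      moreover have "J1 \<union> J2 \<subseteq> right_coideal src tgt C hull (F1 \<union> F2)"
        using hull_Un_subset[of "right_coideal src tgt C" F1 F2] calculation by simp
      ultimately show ?thesis
        by (intro bexI[of _ "right_coideal src tgt C hull (F1 \<union> F2)"]) auto
    qed
  qed
  moreover have "S \<subseteq> \<Union>?\<J>"
  proof
    fix s assume "s \<in> S"
    then have "right_coideal src tgt C hull {s} \<in> ?\<J>"
      by auto
    then show "s \<in> \<Union>?\<J>"
      using hull_inc[of s "{s}"] by blast
  qed
  ultimately have "right_coideal src tgt C hull S \<subseteq> \<Union>?\<J>"
    by (intro hull_minimal)
  then obtain F where "finite F" "F \<subseteq> S" "x \<in> right_coideal src tgt C hull F"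
    using assms(2) by blast
  then show thesis
    by (rule that)
qed

lemma finite_subset_hull_finite_subset:
  assumes "finite X" and "S \<subseteq> C" and "X \<subseteq> right_coideal src tgt C hull S"
  obtains F where "finite F" "F \<subseteq> S" "X \<subseteq> right_coideal src tgt C hull F"
proof -
  have "\<exists>F. finite F \<and> F \<subseteq> S \<and> X \<subseteq> right_coideal src tgt C hull F"
    using assms(1,3)
  proof (induction X rule: finite_induct)
    case empty
    show ?case by auto
  next
    case (insert x X)
    then obtain F1 where "finite F1" "F1 \<subseteq> S" "X \<subseteq> right_coideal src tgt C hull F1"
      by auto
    moreover obtain F2 where "finite F2" "F2 \<subseteq> S" "x \<in> right_coideal src tgt C hull F2"
      using mem_hull_finite_subset[OF \<open>S \<subseteq> C\<close>] insert.prems by auto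
    moreover have "right_coideal src tgt C hull F1 \<union> right_coideal src tgt C hull F2
        \<subseteq> right_coideal src tgt C hull (F1 \<union> F2)"
      by (rule hull_Un_subset)
    ultimately show ?case
      by (intro exI[of _ "F1 \<union> F2"]) auto
  qed
  then show thesis
    using that by auto
qed

lemma independent_mp_if_irredundant:
  assumes F: "F \<subseteq> multipaths src tgt C"
    and irredundant: "\<And>x. x \<in> F \<Longrightarrow> x \<notin> right_coideal src tgt C hull (F - {x})"
  shows "independent_mp src tgt C F"
proof -
  have FC: "F \<subseteq> C"
    using F by (auto simp: multipaths_def)
  have "x \<notin> V.span (F - {x})" if "x \<in> F" for x
  proof -
    have "V.subspace (right_coideal src tgt C hull (F - {x}))"
      using right_coideal_hull[OF C, of "F - {x}"] FC by (auto simp: right_coideal_def)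
    then have "V.span (F - {x}) \<subseteq> right_coideal src tgt C hull (F - {x})"
      by (intro V.span_minimal hull_subset)
    then show ?thesis
      using irredundant[OF that] by auto
  qed
  then have "\<not> V.dependent F"
    by (auto simp: V.dependent_def)
  moreover have "coideal_gen src tgt C x \<inter> F = {x}" if "x \<in> F" for x
  proof -
    have "y = x" if "y \<in> F" "y \<in> right_coideal src tgt C hull {x}" for y
    proof (rule ccontr)
      assume "y \<noteq> x"
      then have "right_coideal src tgt C hull {x} \<subseteq> right_coideal src tgt C hull (F - {y})"
        using \<open>x \<in> F\<close> by (intro hull_mono) auto
      then show False
        using irredundant[OF \<open>y \<in> F\<close>] \<open>y \<in> right_coideal src tgt C hull {x}\<close> by auto
    qed
    then show ?thesis
      using that FC coideal_gen_eq_hull[OF C, of x] hull_inc[of x "{x}"] by auto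
  qed
  ultimately show ?thesis
    using F by (simp add: independent_mp_def)
qed

lemma finite_independent_generating_subset:
  assumes "finite X" and "generates src tgt C X I"
    and B: "B \<subseteq> multipaths src tgt C" and "generates src tgt C B I"
  obtains F where "F \<subseteq> B" "finite F" "independent_mp src tgt C F" "generates src tgt C F I"
proof -
  have X: "X \<subseteq> C" "I = right_coideal src tgt C hull X"
    and "B \<subseteq> C" and I: "I = right_coideal src tgt C hull B"
    using assms by (simp_all add: generates_iff_hull[OF C])
  then obtain F0 where "finite F0" "F0 \<subseteq> B" "X \<subseteq> right_coideal src tgt C hull F0"
    using finite_subset_hull_finite_subset[OF \<open>finite X\<close> \<open>B \<subseteq> C\<close>] hull_subset by metis
  have "right_coideal src tgt C hull X \<subseteq> right_coideal src tgt C hull F0"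
    using hull_mono[OF \<open>X \<subseteq> right_coideal src tgt C hull F0\<close>, where S = "right_coideal src tgt C"]
    by simp
  moreover have "right_coideal src tgt C hull F0 \<subseteq> right_coideal src tgt C hull B"
    using \<open>F0 \<subseteq> B\<close> by (rule hull_mono)
  ultimately have "right_coideal src tgt C hull F0 = I"
    using X(2) I by auto
  moreover obtain F where "F \<subseteq> F0" "right_coideal src tgt C hull F = right_coideal src tgt C hull F0"
    and irredundant: "\<forall>x\<in>F. x \<notin> right_coideal src tgt C hull (F - {x})"
    using hull_irredundant_subset[OF \<open>finite F0\<close>] by blast
  moreover have "F \<subseteq> B"
    using \<open>F \<subseteq> F0\<close> \<open>F0 \<subseteq> B\<close> by blast
  ultimately have "generates src tgt C F I"
    using \<open>B \<subseteq> C\<close> by (auto simp: generates_iff_hull[OF C])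
  moreover have "independent_mp src tgt C F"
    using \<open>F \<subseteq> B\<close> B irredundant by (intro independent_mp_if_irredundant) auto
  moreover have "finite F"
    using \<open>F \<subseteq> F0\<close> \<open>finite F0\<close> by (rule finite_subset)
  ultimately show thesis
    using that \<open>F \<subseteq> B\<close> by blast
qed

end

lemma Delta_trivial_left:
  assumes "f \<in> pathcoalg src tgt"
  shows "Delta src tgt f ((v, []), q) = (if psource q = v then f q else 0)"
  using assms by (cases q) (auto simp: pathcoalg_def Delta_def is_path_def ptarget_def psource_def)

lemma Delta_trivial_right:
  assumes "f \<in> pathcoalg src tgt"
  shows "Delta src tgt f (p, (w, [])) = (if ptarget tgt p = w then f p else 0)"
  using assms by (cases p) (auto simp: pathcoalg_def Delta_def is_path_def ptarget_def psource_def)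

definition restrict_endpoints :: "('a \<Rightarrow> 'v) \<Rightarrow> ('v \<times> 'a list \<Rightarrow> 'k::zero) \<Rightarrow> 'v \<Rightarrow> 'v \<Rightarrow> 'v \<times> 'a list \<Rightarrow> 'k" where
  "restrict_endpoints tgt f v w = (\<lambda>p. if psource p = v \<and> ptarget tgt p = w then f p else 0)"

lemma restrict_endpoints_mem:
  assumes sc: "subcoalgebra src tgt C" and "f \<in> C"
  shows "restrict_endpoints tgt f v w \<in> C"
proof -
  have C: "V.subspace C" and path: "C \<subseteq> pathcoalg src tgt"
    and Delta: "\<And>g. g \<in> C \<Longrightarrow> Delta src tgt g \<in> tensor C C"
    using sc by (auto simp: subcoalgebra_def)
  define g where "g = (\<lambda>q. if psource q = v then f q else 0)"
  have "f \<in> pathcoalg src tgt"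
    using \<open>f \<in> C\<close> path by blast
  then have "g = (\<lambda>q. Delta src tgt f ((v, []), q))"
    by (simp add: Delta_trivial_left g_def)
  then have "g \<in> C"
    using tensor_row_mem[OF C Delta[OF \<open>f \<in> C\<close>]] by simp
  moreover have "g \<in> pathcoalg src tgt"
    using \<open>g \<in> C\<close> path by blast
  then have "restrict_endpoints tgt f v w = (\<lambda>p. Delta src tgt g (p, (w, [])))"
    by (auto simp: Delta_trivial_right restrict_endpoints_def g_def)
  ultimately show ?thesis
    using tensor_column_mem[OF C Delta[OF \<open>g \<in> C\<close>]] by simp
qed

lemma multipath_restrict_endpoints:
  assumes "f \<in> pathcoalg src tgt" and "restrict_endpoints tgt f v w \<noteq> 0"
  shows "multipath src tgt (restrict_endpoints tgt f v w)"
proof -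
  have "{p. restrict_endpoints tgt f v w p \<noteq> 0} \<subseteq> {p. f p \<noteq> 0}"
    by (auto simp: restrict_endpoints_def)
  moreover have "finite {p. f p \<noteq> 0}" and "\<And>p. f p \<noteq> 0 \<Longrightarrow> is_path src tgt p"
    using assms(1) by (auto simp: pathcoalg_def)
  ultimately have "restrict_endpoints tgt f v w \<in> pathcoalg src tgt"
    unfolding pathcoalg_def by (auto intro: finite_subset)
  then show ?thesis
    using assms(2) by (auto simp: multipath_def restrict_endpoints_def split: if_splits)
qed

lemma sum_restrict_endpoints:
  assumes "f \<in> pathcoalg src tgt"
  defines "E \<equiv> (\<lambda>p. (psource p, ptarget tgt p)) ` {p. f p \<noteq> 0}"
  shows "finite E" and "f = (\<Sum>(v, w)\<in>E. restrict_endpoints tgt f v w)"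
proof -
  show "finite E"
    using assms by (simp add: pathcoalg_def)
  have "(\<Sum>(v, w)\<in>E. restrict_endpoints tgt f v w) p = f p" for p
  proof -
    have "(\<Sum>(v, w)\<in>E. restrict_endpoints tgt f v w) p
        = (\<Sum>e\<in>E. if (psource p, ptarget tgt p) = e then f p else 0)"
      unfolding sum_fun_apply by (intro sum.cong) (auto simp: restrict_endpoints_def split: if_splits)
    also have "\<dots> = f p"
      using \<open>finite E\<close> by (auto simp: sum.delta' E_def)
    finally show ?thesis .
  qed
  then show "f = (\<Sum>(v, w)\<in>E. restrict_endpoints tgt f v w)"
    by auto
qed

lemma subcoalgebra_subset_span_multipaths:
  assumes sc: "subcoalgebra src tgt C"
  shows "C \<subseteq> V.span (multipaths src tgt C)"
proof
  fix f assume "f \<in> C"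
  then have f: "f \<in> pathcoalg src tgt"
    using sc by (auto simp: subcoalgebra_def)
  have "restrict_endpoints tgt f v w \<in> V.span (multipaths src tgt C)" for v w
  proof (cases "restrict_endpoints tgt f v w = 0")
    case True
    then show ?thesis by (simp add: V.span_zero)
  next
    case False
    then show ?thesis
      using multipath_restrict_endpoints[OF f] restrict_endpoints_mem[OF sc \<open>f \<in> C\<close>]
      by (intro V.span_base) (simp add: multipaths_def)
  qed
  then show "f \<in> V.span (multipaths src tgt C)"
    by (subst sum_restrict_endpoints(2)[OF f]) (auto intro: V.span_sum)
qed

lemma generates_multipaths:
  assumes sc: "subcoalgebra src tgt C"
  shows "generates src tgt C (multipaths src tgt C) C"
proof -
  have "C \<subseteq> J" if "right_coideal src tgt C J" and "multipaths src tgt C \<subseteq> J" for J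
  proof -
    have "V.span (multipaths src tgt C) \<subseteq> J"
      using that by (intro V.span_minimal) (auto simp: right_coideal_def)
    then show ?thesis
      using subcoalgebra_subset_span_multipaths[OF sc] by blast
  qed
  then show ?thesis
    using subcoalgebra_right_coideal_self[OF sc] by (auto simp: generates_def multipaths_def)
qed

theorem lemma4p20:
  fixes src tgt :: "'a \<Rightarrow> 'v" and C :: "('v \<times> 'a list \<Rightarrow> 'k::field) set"
  assumes "subcoalgebra src tgt C"
  shows "(\<forall>I. right_coideal src tgt C I \<and> finite_dim I \<longrightarrow>
            (\<exists>X J. X \<subseteq> multipaths src tgt C \<and> generates src tgt C X J \<and> I \<subseteq> J))
       \<and> (\<forall>I B. right_coideal src tgt C I \<and> (\<exists>X. finite X \<and> generates src tgt C X I) \<and>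
            B \<subseteq> multipaths src tgt C \<and> generates src tgt C B I \<longrightarrow>
            (\<exists>F. F \<subseteq> B \<and> finite F \<and> independent_mp src tgt C F \<and> generates src tgt C F I))"
proof (intro conjI allI impI; elim conjE exE)
  \<comment> \<open>Part (1) needs no finite dimensionality: every right coideal lies in C.\<close>
  show "\<exists>X J. X \<subseteq> multipaths src tgt C \<and> generates src tgt C X J \<and> I \<subseteq> J"
    if "right_coideal src tgt C I" for I
    using that generates_multipaths[OF assms] by (auto simp: right_coideal_def)
  show "\<exists>F. F \<subseteq> B \<and> finite F \<and> independent_mp src tgt C F \<and> generates src tgt C F I"
    if "finite X" "generates src tgt C X I"
      and "B \<subseteq> multipaths src tgt C" "generates src tgt C B I" for I B X
    using finite_independent_generating_subset[OF subcoalgebra_right_coideal_self[OF assms] that]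
    by metis
qed

end
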